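(* There exists a 5-chromatic planar graph if and only if there exists a 4-chromatic planar graph $G$ with distinct vertices $u,v$ such that $\{u,v\}$ is an implicit-edge of $G$ and the vertex contraction $G/u,v$ is planar.
   Context: All graphs are finite, simple and connected. For a graph $G$ and vertices $u,v$, $G-uv$ denotes $G$ with the edge $uv$ removed if $uv\in E(G)$ (and $G$ itself otherwise). A $k$-coloring is a proper vertex coloring with colors from $\{1,\dots,k\}$. Given a $k$-chromatic graph $G$, a pair of distinct vertices $\{u,v\}$ is an implicit-edge of $G$ iff there is no $k$-coloring $c$ of $G-uv$ with $c(u)=c(v)$. The vertex contraction $G/u,v$ replaces $u,v$ by a single new vertex $w$ with $N(w)=(N(u)\cup N(v))\setminus\{u,v\}$. *)

theory Defs
  imports "HOL-Analysis.Analysis"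
begin

definition simple_graph :: "nat set \<Rightarrow> nat set set \<Rightarrow> bool" where
  "simple_graph V E \<longleftrightarrow> finite V \<and> V \<noteq> {} \<and> (\<forall>e\<in>E. e \<subseteq> V \<and> card e = 2)"

definition adj :: "nat set set \<Rightarrow> nat \<Rightarrow> nat \<Rightarrow> bool" where
  "adj E x y \<longleftrightarrow> {x, y} \<in> E \<and> x \<noteq> y"

definition graph_connected :: "nat set \<Rightarrow> nat set set \<Rightarrow> bool" where
  "graph_connected V E \<longleftrightarrow>
     (\<forall>x\<in>V. \<forall>y\<in>V. (x, y) \<in> {(a, b). a \<in> V \<and> b \<in> V \<and> adj E a b}\<^sup>*)"

definition is_coloring :: "nat set \<Rightarrow> nat set set \<Rightarrow> nat \<Rightarrow> (nat \<Rightarrow> nat) \<Rightarrow> bool" where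
  "is_coloring V E k c \<longleftrightarrow>
     (\<forall>x\<in>V. c x \<in> {1..k}) \<and> (\<forall>x y. {x, y} \<in> E \<and> x \<noteq> y \<longrightarrow> c x \<noteq> c y)"

definition colorable :: "nat set \<Rightarrow> nat set set \<Rightarrow> nat \<Rightarrow> bool" where
  "colorable V E k \<longleftrightarrow> (\<exists>c. is_coloring V E k c)"

definition k_chromatic :: "nat set \<Rightarrow> nat set set \<Rightarrow> nat \<Rightarrow> bool" where
  "k_chromatic V E k \<longleftrightarrow> colorable V E k \<and> \<not> colorable V E (k - 1)"

definition delete_edge :: "nat set set \<Rightarrow> nat \<Rightarrow> nat \<Rightarrow> nat set set" where
  "delete_edge E u v = E - {{u, v}}"

definition implicit_edge :: "nat set \<Rightarrow> nat set set \<Rightarrow> nat \<Rightarrow> nat \<Rightarrow> nat \<Rightarrow> bool" where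
  "implicit_edge V E k u v \<longleftrightarrow>
     k_chromatic V E k \<and> u \<in> V \<and> v \<in> V \<and> u \<noteq> v \<and>
     \<not> (\<exists>c. is_coloring V (delete_edge E u v) k c \<and> c u = c v)"

definition neighbours :: "nat set set \<Rightarrow> nat \<Rightarrow> nat set" where
  "neighbours E x = {y. adj E x y}"

text \<open>Vertex contraction G/u,v; the new vertex w is represented by the label u
  (this yields a graph isomorphic to the contraction).\<close>
definition contract_verts :: "nat set \<Rightarrow> nat set set \<Rightarrow> nat \<Rightarrow> nat \<Rightarrow> nat set" where
  "contract_verts V E u v = V - {v}"

definition contract_edges :: "nat set \<Rightarrow> nat set set \<Rightarrow> nat \<Rightarrow> nat \<Rightarrow> nat set set" where
  "contract_edges V E u v =
     {e \<in> E. u \<notin> e \<and> v \<notin> e} \<union>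
     {{u, x} | x. x \<in> (neighbours E u \<union> neighbours E v) - {u, v}}"

definition planar :: "nat set \<Rightarrow> nat set set \<Rightarrow> bool" where
  "planar V E \<longleftrightarrow>
     (\<exists>(pos :: nat \<Rightarrow> complex) (\<gamma> :: nat set \<Rightarrow> real \<Rightarrow> complex).
        inj_on pos V \<and>
        (\<forall>e\<in>E. \<exists>x y. e = {x, y} \<and> arc (\<gamma> e) \<and>
             pathstart (\<gamma> e) = pos x \<and> pathfinish (\<gamma> e) = pos y \<and>
             path_image (\<gamma> e) \<inter> pos ` V = {pos x, pos y}) \<and>
        (\<forall>e\<in>E. \<forall>e'\<in>E. e \<noteq> e' \<longrightarrow>
             path_image (\<gamma> e) \<inter> path_image (\<gamma> e') \<subseteq> pos ` (e \<inter> e')))"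

end

theory Submission
  imports Defs
begin

text \<open>
  From 4-chromatic to 5-chromatic: contracting an implicit edge uv of a connected 4-chromatic
  graph G gives a connected 5-chromatic graph.  A 5-colouring of G/u,v is obtained by giving the
  merged vertex a fifth colour; a 4-colouring of G/u,v would pull back to a 4-colouring of G - uv
  in which u and v have the same colour, which is excluded by the definition of an implicit edge.

  From 5-chromatic to 4-chromatic: a planar graph that is not 4-colourable contains a connected
  edge-critical subgraph H (not 4-colourable, but H - ab is 4-colourable for some edge ab).
  Subdividing ab by a new vertex v yields a planar graph G that is 4-colourable (colour v with a
  colour unused at a and b) but not 3-colourable (recolour a with a fourth colour).  The pair av
  is an implicit edge of G, and G/a,v is H again, which is planar.
\<close>

definition adj_rel :: "nat set \<Rightarrow> nat set set \<Rightarrow> (nat \<times> nat) set" where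
  "adj_rel V E = {(x, y). x \<in> V \<and> y \<in> V \<and> adj E x y}"

lemma adj_rel_iff: "(x, y) \<in> adj_rel V E \<longleftrightarrow> x \<in> V \<and> y \<in> V \<and> {x, y} \<in> E \<and> x \<noteq> y"
  by (simp add: adj_rel_def adj_def)

lemma graph_connected_adj_rel:
  "graph_connected V E \<longleftrightarrow> (\<forall>x\<in>V. \<forall>y\<in>V. (x, y) \<in> (adj_rel V E)\<^sup>*)"
  by (simp add: graph_connected_def adj_rel_def)

text \<open>Since adjacency is symmetric, a graph is connected as soon as every vertex is
  reachable from one fixed root.\<close>

lemma graph_connected_from_root:
  assumes "\<And>p. p \<in> V \<Longrightarrow> (r, p) \<in> (adj_rel V E)\<^sup>*"
  shows "graph_connected V E"
proof -
  have sym: "(adj_rel V E)\<inverse> = adj_rel V E"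
    by (auto simp: adj_rel_iff insert_commute)
  have "(p, q) \<in> (adj_rel V E)\<^sup>*" if "p \<in> V" "q \<in> V" for p q
  proof -
    have "(p, r) \<in> ((adj_rel V E)\<inverse>)\<^sup>*"
      using assms[OF that(1)] by (rule rtrancl_converseI)
    then have "(p, r) \<in> (adj_rel V E)\<^sup>*"
      by (simp only: sym)
    then show ?thesis
      using assms[OF that(2)] by (rule rtrancl_trans)
  qed
  then show ?thesis
    by (simp add: graph_connected_adj_rel)
qed

lemma rtrancl_map_steps:
  assumes "\<And>p q. (p, q) \<in> R \<Longrightarrow> (f p, f q) \<in> R'\<^sup>*" "(x, y) \<in> R\<^sup>*"
  shows "(f x, f y) \<in> R'\<^sup>*"
  using assms(2)
proof (induction rule: rtrancl_induct)
  case base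
  then show ?case by simp
next
  case (step y z)
  then show ?case using assms(1) rtrancl_trans by metis
qed

lemma simple_graph_edge:
  assumes "simple_graph V E" "e \<in> E"
  obtains x y where "e = {x, y}" "x \<noteq> y" "x \<in> V" "y \<in> V"
proof -
  have "card e = 2" "e \<subseteq> V"
    using assms by (auto simp: simple_graph_def)
  then show ?thesis
    using that by (auto simp: card_2_iff)
qed

lemma is_coloring_mono:
  "is_coloring V E k c \<Longrightarrow> V' \<subseteq> V \<Longrightarrow> E' \<subseteq> E \<Longrightarrow> is_coloring V' E' k c"
  by (auto simp: is_coloring_def)

lemma colorable_mono:
  "colorable V E k \<Longrightarrow> V' \<subseteq> V \<Longrightarrow> E' \<subseteq> E \<Longrightarrow> colorable V' E' k"
  unfolding colorable_def using is_coloring_mono by blast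

lemma colorable_no_edges: "1 \<le> k \<Longrightarrow> colorable V {} k"
  unfolding colorable_def is_coloring_def by (rule exI[of _ "\<lambda>_. 1"]) auto

lemma colorable_extend_vertices:
  assumes "1 \<le> k" "\<forall>e\<in>E. e \<subseteq> S" "colorable S E k"
  shows "colorable V E k"
proof -
  obtain c where c: "is_coloring S E k c"
    using assms(3) by (auto simp: colorable_def)
  have "is_coloring V E k (\<lambda>z. if z \<in> S then c z else 1)"
    using c assms(1,2) unfolding is_coloring_def by fastforce
  then show ?thesis
    by (auto simp: colorable_def)
qed

lemma is_coloring_glue:
  assumes closed: "\<And>p q. {p, q} \<in> E \<Longrightarrow> p \<in> S \<Longrightarrow> q \<in> S"
    and inside: "is_coloring V {e \<in> E. e \<subseteq> S} k c1"
    and outside: "is_coloring V (E - {e \<in> E. e \<subseteq> S}) k c2"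
  shows "is_coloring V E k (\<lambda>z. if z \<in> S then c1 z else c2 z)"
  unfolding is_coloring_def
proof (intro conjI allI impI ballI)
  fix z assume "z \<in> V"
  then show "(if z \<in> S then c1 z else c2 z) \<in> {1..k}"
    using inside outside by (simp add: is_coloring_def)
next
  fix p q assume pq: "{p, q} \<in> E \<and> p \<noteq> q"
  have "p \<in> S \<longleftrightarrow> q \<in> S"
    using closed[of p q] closed[of q p] pq by (auto simp: insert_commute)
  then show "(if p \<in> S then c1 p else c2 p) \<noteq> (if q \<in> S then c1 q else c2 q)"
    using inside outside pq by (auto simp: is_coloring_def)
qed

lemma minimal_uncolorable_subset:
  assumes "finite E" "\<not> colorable V E k"
  obtains F where "F \<subseteq> E" "\<not> colorable V F k" "\<And>F'. F' \<subset> F \<Longrightarrow> colorable V F' k"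
proof -
  obtain F where F: "F \<subseteq> E \<and> \<not> colorable V F k"
    and least: "\<And>F'. F' \<subseteq> E \<and> \<not> colorable V F' k \<Longrightarrow> card F \<le> card F'"
    using ex_has_least_nat[of "\<lambda>F. F \<subseteq> E \<and> \<not> colorable V F k" E card] assms(2) by blast
  have "colorable V F' k" if "F' \<subset> F" for F'
  proof (rule ccontr)
    assume "\<not> colorable V F' k"
    then have "card F \<le> card F'"
      using least that F by blast
    moreover have "card F' < card F"
      using psubset_card_mono[OF _ that] F assms(1) finite_subset by blast
    ultimately show False by simp
  qed
  then show ?thesis
    using that F by blast
qed

definition component :: "nat set \<Rightarrow> nat set set \<Rightarrow> nat \<Rightarrow> nat set" where
  "component V E x = {z. (x, z) \<in> (adj_rel V E)\<^sup>*}"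

lemma component_subset: "x \<in> V \<Longrightarrow> component V E x \<subseteq> V"
  by (auto simp: component_def adj_rel_def elim: rtranclE)

lemma component_closed:
  assumes "\<forall>e\<in>E. e \<subseteq> V" "p \<in> component V E x" "{p, q} \<in> E"
  shows "q \<in> component V E x"
proof (cases "p = q")
  case False
  then have "(p, q) \<in> adj_rel V E"
    using assms(1,3) by (auto simp: adj_rel_iff)
  then show ?thesis
    using assms(2) by (auto simp: component_def)
qed (use assms(2) in simp)

lemma component_connected: "graph_connected (component V E x) E"
proof (rule graph_connected_from_root)
  fix p assume "p \<in> component V E x"
  then have "(x, p) \<in> (adj_rel V E)\<^sup>*"
    by (simp add: component_def)
  then show "(x, p) \<in> (adj_rel (component V E x) E)\<^sup>*"
  proof (induction rule: rtrancl_induct)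
    case (step w z)
    have "w \<in> component V E x" "z \<in> component V E x"
      using step.hyps rtrancl_into_rtrancl[OF step.hyps] by (simp_all add: component_def)
    then have "(w, z) \<in> adj_rel (component V E x) E"
      using step.hyps(2) by (simp add: adj_rel_def)
    then show ?case
      by (rule rtrancl_into_rtrancl[OF step.IH])
  qed simp
qed

text \<open>In an edge-minimal non-k-colourable graph all edges lie in one component: otherwise
  both the edges inside the component of an edge xy and the remaining ones are proper subsets,
  hence k-colourable, and the two colourings glue to a k-colouring.\<close>

lemma critical_edges_in_component:
  assumes edges_in: "\<forall>e\<in>F. e \<subseteq> V"
    and uncolorable: "\<not> colorable V F k"
    and minimal: "\<And>F'. F' \<subset> F \<Longrightarrow> colorable V F' k"
    and edge: "{x, y} \<in> F"
  shows "\<forall>e\<in>F. e \<subseteq> component V F x"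
proof (rule ccontr)
  let ?C = "component V F x"
  let ?inside = "{e \<in> F. e \<subseteq> ?C}"
  assume "\<not> (\<forall>e\<in>F. e \<subseteq> ?C)"
  then have "?inside \<subset> F"
    by auto
  then obtain c1 where c1: "is_coloring V ?inside k c1"
    using minimal colorable_def by metis
  have "x \<in> ?C"
    by (simp add: component_def)
  moreover have "y \<in> ?C"
    using component_closed[OF edges_in \<open>x \<in> ?C\<close> edge] .
  ultimately have "{x, y} \<in> ?inside"
    using edge by blast
  then have "F - ?inside \<subset> F"
    by blast
  then obtain c2 where c2: "is_coloring V (F - ?inside) k c2"
    using minimal colorable_def by metis
  have "is_coloring V F k (\<lambda>z. if z \<in> ?C then c1 z else c2 z)"
    by (rule is_coloring_glue[OF component_closed[OF edges_in] c1 c2])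
  then show False
    using uncolorable by (auto simp: colorable_def)
qed

lemma connected_critical_subgraph:
  assumes simple: "simple_graph V E" and uncolorable: "\<not> colorable V E k" and "1 \<le> k"
  obtains S F a b where "simple_graph S F" "graph_connected S F" "S \<subseteq> V" "F \<subseteq> E"
    "{a, b} \<in> F" "\<not> colorable S F k" "colorable S (F - {{a, b}}) k"
proof -
  have "E \<subseteq> Pow V" "finite V"
    using simple by (auto simp: simple_graph_def)
  then have "finite E"
    by (simp add: finite_subset)
  then obtain F where F: "F \<subseteq> E" "\<not> colorable V F k"
    and minimal: "\<And>F'. F' \<subset> F \<Longrightarrow> colorable V F' k"
    using minimal_uncolorable_subset uncolorable by blast
  have edges_in: "\<forall>e\<in>F. e \<subseteq> V"
    using F(1) simple by (auto simp: simple_graph_def)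
  have "F \<noteq> {}"
    using F(2) colorable_no_edges \<open>1 \<le> k\<close> by auto
  then obtain e0 where "e0 \<in> F"
    by auto
  then obtain a b where ab: "{a, b} \<in> F" "a \<in> V"
    using simple_graph_edge[OF simple, of e0] F(1) by (metis subsetD)
  define S where "S = component V F a"
  have in_S: "\<forall>e\<in>F. e \<subseteq> S"
    unfolding S_def by (rule critical_edges_in_component[OF edges_in F(2) minimal ab(1)])
  have "S \<subseteq> V"
    unfolding S_def by (rule component_subset[OF ab(2)])
  have "a \<in> S"
    by (simp add: S_def component_def)
  have "simple_graph S F"
    using finite_subset[OF \<open>S \<subseteq> V\<close>] \<open>a \<in> S\<close> simple F(1) in_S
    unfolding simple_graph_def by auto
  moreover have "graph_connected S F"
    unfolding S_def by (rule component_connected)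
  moreover have "\<not> colorable S F k"
    using colorable_extend_vertices[OF \<open>1 \<le> k\<close> in_S] F(2) by auto
  moreover have "colorable S (F - {{a, b}}) k"
  proof -
    have "F - {{a, b}} \<subset> F"
      using ab(1) by auto
    then have "colorable V (F - {{a, b}}) k"
      by (rule minimal)
    then show ?thesis
      by (rule colorable_mono[OF _ \<open>S \<subseteq> V\<close> order_refl])
  qed
  ultimately show ?thesis
    using that \<open>S \<subseteq> V\<close> F(1) ab(1) by auto
qed

definition subdivide :: "nat set set \<Rightarrow> nat \<Rightarrow> nat \<Rightarrow> nat \<Rightarrow> nat set set" where
  "subdivide E a b v = E - {{a, b}} \<union> {{a, v}, {v, b}}"

lemma subdivide_commute: "subdivide E b a v = subdivide E a b v"
  by (auto simp: subdivide_def insert_commute)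

definition drawn_edge ::
  "(nat \<Rightarrow> complex) \<Rightarrow> nat set \<Rightarrow> (real \<Rightarrow> complex) \<Rightarrow> nat \<Rightarrow> nat \<Rightarrow> bool" where
  "drawn_edge pos V g x y \<longleftrightarrow>
     arc g \<and> pathstart g = pos x \<and> pathfinish g = pos y \<and> path_image g \<inter> pos ` V = {pos x, pos y}"

definition plane_embedding ::
  "nat set \<Rightarrow> nat set set \<Rightarrow> (nat \<Rightarrow> complex) \<Rightarrow> (nat set \<Rightarrow> real \<Rightarrow> complex) \<Rightarrow> bool" where
  "plane_embedding V E pos \<gamma> \<longleftrightarrow>
     inj_on pos V \<and>
     (\<forall>e\<in>E. \<exists>x y. e = {x, y} \<and> drawn_edge pos V (\<gamma> e) x y) \<and>
     (\<forall>e\<in>E. \<forall>e'\<in>E. e \<noteq> e' \<longrightarrow> path_image (\<gamma> e) \<inter> path_image (\<gamma> e') \<subseteq> pos ` (e \<inter> e'))"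

lemma planar_iff_embedding: "planar V E \<longleftrightarrow> (\<exists>pos \<gamma>. plane_embedding V E pos \<gamma>)"
  unfolding planar_def plane_embedding_def drawn_edge_def by blast

lemma plane_embeddingD:
  assumes "plane_embedding V E pos \<gamma>"
  shows "inj_on pos V"
    and "e \<in> E \<Longrightarrow> \<exists>x y. e = {x, y} \<and> drawn_edge pos V (\<gamma> e) x y"
    and "e \<in> E \<Longrightarrow> e' \<in> E \<Longrightarrow> e \<noteq> e' \<Longrightarrow>
           path_image (\<gamma> e) \<inter> path_image (\<gamma> e') \<subseteq> pos ` (e \<inter> e')"
  using assms by (simp_all add: plane_embedding_def)

lemma drawn_edge_restrict:
  assumes "drawn_edge pos V g x y" "V' \<subseteq> V" "x \<in> V'" "y \<in> V'"
  shows "drawn_edge pos V' g x y"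
  using assms unfolding drawn_edge_def by blast

lemma planar_subgraph:
  assumes "planar V E" "V' \<subseteq> V" "E' \<subseteq> E" "\<forall>e\<in>E'. e \<subseteq> V'"
  shows "planar V' E'"
proof -
  obtain pos \<gamma> where emb: "plane_embedding V E pos \<gamma>"
    using assms(1) planar_iff_embedding by blast
  have "\<exists>x y. e = {x, y} \<and> drawn_edge pos V' (\<gamma> e) x y" if "e \<in> E'" for e
  proof -
    obtain x y where "e = {x, y}" "drawn_edge pos V (\<gamma> e) x y"
      using plane_embeddingD(2)[OF emb] \<open>e \<in> E'\<close> assms(3) by blast
    then show ?thesis
      using drawn_edge_restrict[OF _ assms(2)] assms(4) \<open>e \<in> E'\<close> by blast
  qed
  then have "plane_embedding V' E' pos \<gamma>"
    using plane_embeddingD(1,3)[OF emb] assms(2,3) inj_on_subset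
    unfolding plane_embedding_def by (metis subsetD)
  then show ?thesis using planar_iff_embedding by blast
qed

lemma arc_halves:
  assumes "arc g"
  shows "arc (subpath 0 (1/2) g)" "arc (subpath (1/2) 1 g)"
    and "path_image (subpath 0 (1/2) g) \<inter> path_image (subpath (1/2) 1 g) = {g (1/2)}"
    and "path_image g = path_image (subpath 0 (1/2) g) \<union> path_image (subpath (1/2) 1 g)"
proof -
  have "arc (subpath 0 (1/2) g +++ subpath (1/2) 1 g)"
    using assms by (simp add: join_subpaths_middle)
  then show "arc (subpath 0 (1/2) g)" "arc (subpath (1/2) 1 g)"
    and "path_image (subpath 0 (1/2) g) \<inter> path_image (subpath (1/2) 1 g) = {g (1/2)}"
    by (simp_all add: arc_join_eq_alt)
  show "path_image g = path_image (subpath 0 (1/2) g) \<union> path_image (subpath (1/2) 1 g)"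
    using path_image_join[of "subpath 0 (1/2) g" "subpath (1/2) 1 g"]
    by (simp add: join_subpaths_middle)
qed

lemma drawn_edge_add_vertex:
  assumes "drawn_edge pos V g x y" "x \<in> V" "y \<in> V" "v \<notin> V" "p \<notin> path_image g"
  shows "drawn_edge (pos(v := p)) (insert v V) g x y"
proof -
  have "pos(v := p) ` insert v V = insert p (pos ` V)"
    using assms(4) by (metis fun_upd_image insertI1 Diff_insert_absorb image_insert fun_upd_same)
  moreover have "(pos(v := p)) x = pos x" "(pos(v := p)) y = pos y"
    using assms(2-4) by auto
  ultimately show ?thesis
    using assms(1,5) unfolding drawn_edge_def by auto
qed

text \<open>Subdividing a drawn edge ab: the new vertex v is placed at the point of the arc of ab
  with parameter 1/2, and the two halves of that arc become the arcs of av and vb.\<close>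

locale subdivided_drawing =
  fixes S :: "nat set" and E :: "nat set set"
    and pos :: "nat \<Rightarrow> complex" and \<gamma> :: "nat set \<Rightarrow> real \<Rightarrow> complex"
    and a b v :: nat
  assumes embedding: "plane_embedding S E pos \<gamma>"
    and edges_in: "\<And>e. e \<in> E \<Longrightarrow> e \<subseteq> S"
    and edge: "{a, b} \<in> E"
    and drawn: "drawn_edge pos S (\<gamma> {a, b}) a b"
    and fresh: "v \<notin> S"
begin

definition split_point :: complex where "split_point = \<gamma> {a, b} (1/2)"
definition first_half :: "real \<Rightarrow> complex" where "first_half = subpath 0 (1/2) (\<gamma> {a, b})"
definition second_half :: "real \<Rightarrow> complex" where "second_half = subpath (1/2) 1 (\<gamma> {a, b})"

definition new_pos :: "nat \<Rightarrow> complex" where "new_pos = pos(v := split_point)"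
definition new_arc :: "nat set \<Rightarrow> real \<Rightarrow> complex" where
  "new_arc = \<gamma>({a, v} := first_half, {v, b} := second_half)"

lemmas inj_pos = plane_embeddingD(1)[OF embedding]
lemmas crossing = plane_embeddingD(3)[OF embedding]

lemma ends: "a \<in> S" "b \<in> S" "a \<noteq> v" "b \<noteq> v"
  using edges_in[OF edge] fresh by auto

lemma halves:
  "arc first_half" "arc second_half"
  "pathstart first_half = pos a" "pathfinish first_half = split_point"
  "pathstart second_half = split_point" "pathfinish second_half = pos b"
  "path_image first_half \<inter> path_image second_half = {split_point}"
  "path_image (\<gamma> {a, b}) = path_image first_half \<union> path_image second_half"
proof -
  have "arc (\<gamma> {a, b})" "\<gamma> {a, b} 0 = pos a" "\<gamma> {a, b} 1 = pos b"
    using drawn by (simp_all add: drawn_edge_def pathstart_def pathfinish_def)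
  then show
    "arc first_half" "arc second_half"
    "pathstart first_half = pos a" "pathfinish first_half = split_point"
    "pathstart second_half = split_point" "pathfinish second_half = pos b"
    "path_image first_half \<inter> path_image second_half = {split_point}"
    "path_image (\<gamma> {a, b}) = path_image first_half \<union> path_image second_half"
    using arc_halves[of "\<gamma> {a, b}"]
    by (simp_all add: first_half_def second_half_def split_point_def)
qed

lemma a_ne_b: "a \<noteq> b"
  using drawn arc_distinct_ends inj_pos ends unfolding drawn_edge_def by metis

text \<open>The split point is not a vertex point: otherwise it would be an endpoint of the arc,
  making one of the two halves a closed curve.\<close>

lemma split_point_not_vertex: "split_point \<notin> pos ` S"
proof
  assume "split_point \<in> pos ` S"
  moreover have "split_point \<in> path_image (\<gamma> {a, b})"
    using halves(7,8) by auto
  ultimately have "split_point = pos a \<or> split_point = pos b"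
    using drawn unfolding drawn_edge_def by auto
  then show False
    using halves(1-6) arc_distinct_ends by metis
qed

lemma half_endpoints:
  "pos a \<in> path_image first_half" "pos b \<in> path_image second_half"
  using halves(3,6) pathstart_in_path_image[of first_half] pathfinish_in_path_image[of second_half]
  by simp_all

lemma halves_vertices: "(path_image first_half \<union> path_image second_half) \<inter> pos ` S = {pos a, pos b}"
  using drawn halves(8) by (simp add: drawn_edge_def)

lemma first_half_vertices: "path_image first_half \<inter> pos ` S = {pos a}"
proof -
  have "pos b \<notin> path_image first_half"
    using half_endpoints halves(7) split_point_not_vertex imageI[OF ends(2), of pos]
    by (metis IntI singletonD)
  moreover have "path_image first_half \<inter> pos ` S \<subseteq> {pos a, pos b}"
    using halves_vertices by blast
  ultimately show ?thesis
    using half_endpoints ends(1) by auto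
qed

lemma second_half_vertices: "path_image second_half \<inter> pos ` S = {pos b}"
proof -
  have "pos a \<notin> path_image second_half"
    using half_endpoints halves(7) split_point_not_vertex imageI[OF ends(1), of pos]
    by (metis IntI singletonD)
  moreover have "path_image second_half \<inter> pos ` S \<subseteq> {pos a, pos b}"
    using halves_vertices by blast
  ultimately show ?thesis
    using half_endpoints ends(2) by auto
qed

text \<open>Any other edge meets the arc of ab only at shared endpoints, so it meets a part of
  that arc containing a single vertex point pos w only in pos w, and only if w is an endpoint
  of the edge.\<close>

lemma other_edge_meets_part:
  assumes "e \<in> E" "e \<noteq> {a, b}"
    and part: "P \<subseteq> path_image (\<gamma> {a, b})" "P \<inter> pos ` S = {pos w}" "w \<in> {a, b}"
  shows "path_image (\<gamma> e) \<inter> P \<subseteq> pos ` (e \<inter> {w})"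
proof
  fix z assume z: "z \<in> path_image (\<gamma> e) \<inter> P"
  then have "z \<in> path_image (\<gamma> e) \<inter> path_image (\<gamma> {a, b})"
    using part(1) by auto
  then have "z \<in> pos ` (e \<inter> {a, b})"
    using crossing[OF assms(1) edge assms(2)] by (rule subsetD[rotated])
  then obtain w' where w': "w' \<in> e" "w' \<in> {a, b}" "z = pos w'"
    by auto
  then have "pos w' \<in> P \<inter> pos ` S"
    using z ends by auto
  then have "pos w' = pos w"
    using part(2) by simp
  then have "w' = w"
    using w'(2) part(3) ends inj_onD[OF inj_pos] by auto
  then show "z \<in> pos ` (e \<inter> {w})"
    using w' by simp
qed

lemma other_edge_first_half:
  assumes "e \<in> E" "e \<noteq> {a, b}"
  shows "path_image (\<gamma> e) \<inter> path_image first_half \<subseteq> pos ` (e \<inter> {a})"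
  by (rule other_edge_meets_part[OF assms _ first_half_vertices]) (use halves(8) in auto)

lemma other_edge_second_half:
  assumes "e \<in> E" "e \<noteq> {a, b}"
  shows "path_image (\<gamma> e) \<inter> path_image second_half \<subseteq> pos ` (e \<inter> {b})"
  by (rule other_edge_meets_part[OF assms _ second_half_vertices]) (use halves(8) in auto)

lemma other_edge_avoids_split_point:
  assumes "e \<in> E" "e \<noteq> {a, b}"
  shows "split_point \<notin> path_image (\<gamma> e)"
proof
  assume "split_point \<in> path_image (\<gamma> e)"
  moreover have "split_point \<in> path_image first_half"
    using halves(4) pathfinish_in_path_image by metis
  ultimately have "split_point \<in> pos ` (e \<inter> {a})"
    using other_edge_first_half[OF assms] by auto
  then show False
    using split_point_not_vertex ends by auto
qed

lemma new_pos_old: "z \<in> S \<Longrightarrow> new_pos z = pos z"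
  using fresh unfolding new_pos_def by auto

lemma new_pos_image: "e \<subseteq> S \<Longrightarrow> new_pos ` e = pos ` e"
  using new_pos_old by (intro image_cong) auto

lemma new_arc_old:
  assumes "e \<in> E"
  shows "new_arc e = \<gamma> e"
proof -
  have "v \<notin> e"
    using edges_in[OF assms] fresh by auto
  then have "e \<noteq> {a, v}" "e \<noteq> {v, b}"
    by auto
  then show ?thesis
    by (simp add: new_arc_def)
qed

lemma new_arc_halves: "new_arc {a, v} = first_half" "new_arc {v, b} = second_half"
proof -
  have "{a, v} \<noteq> {v, b}"
    using a_ne_b ends(3) by (auto simp: doubleton_eq_iff)
  then show "new_arc {a, v} = first_half" "new_arc {v, b} = second_half"
    by (simp_all add: new_arc_def)
qed

lemma new_inj: "inj_on new_pos (insert v S)"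
proof -
  have "inj_on new_pos S"
    using inj_pos inj_on_cong[of S new_pos pos] new_pos_old by simp
  moreover have "new_pos v \<notin> new_pos ` S"
    using split_point_not_vertex new_pos_image[of S] by (simp add: new_pos_def)
  ultimately show ?thesis
    using fresh by simp
qed

lemma split_point_on_halves:
  "split_point \<in> path_image first_half" "split_point \<in> path_image second_half"
  using halves(7) by auto

lemma new_pos_new: "new_pos v = split_point"
  by (simp add: new_pos_def)

lemma new_pos_vertices: "new_pos ` insert v S = insert split_point (pos ` S)"
  using new_pos_image[of S] new_pos_new by simp

lemma new_edges_drawn:
  assumes "e \<in> subdivide E a b v"
  shows "\<exists>x y. e = {x, y} \<and> drawn_edge new_pos (insert v S) (new_arc e) x y"
proof -
  have new_a: "new_pos a = pos a" and new_b: "new_pos b = pos b"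
    using new_pos_old ends by simp_all
  consider "e \<in> E" "e \<noteq> {a, b}" | "e = {a, v}" | "e = {v, b}"
    using assms by (auto simp: subdivide_def)
  then show ?thesis
  proof cases
    case 1
    then obtain x y where xy: "e = {x, y}" "drawn_edge pos S (\<gamma> e) x y"
      using plane_embeddingD(2)[OF embedding] by blast
    have "x \<in> S" "y \<in> S"
      using edges_in[OF 1(1)] xy(1) by auto
    then have "drawn_edge new_pos (insert v S) (\<gamma> e) x y"
      unfolding new_pos_def
      using drawn_edge_add_vertex[OF xy(2) _ _ fresh other_edge_avoids_split_point[OF 1]] by simp
    then show ?thesis
      using xy(1) new_arc_old[OF 1(1)] by auto
  next
    case 2
    have "path_image first_half \<inter> new_pos ` insert v S = {new_pos a, new_pos v}"
      unfolding new_pos_vertices using split_point_on_halves(1)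
      by (auto simp: Int_insert_right first_half_vertices new_a new_pos_new)
    then have "drawn_edge new_pos (insert v S) first_half a v"
      using halves(1,3,4) new_a new_pos_new by (simp add: drawn_edge_def)
    then show ?thesis
      using 2 new_arc_halves(1) by auto
  next
    case 3
    have "path_image second_half \<inter> new_pos ` insert v S = {new_pos v, new_pos b}"
      unfolding new_pos_vertices using split_point_on_halves(2)
      by (auto simp: Int_insert_right second_half_vertices new_b new_pos_new)
    then have "drawn_edge new_pos (insert v S) second_half v b"
      using halves(2,5,6) new_b new_pos_new by (simp add: drawn_edge_def)
    then show ?thesis
      using 3 new_arc_halves(2) by auto
  qed
qed

lemma new_crossing_old_new:
  assumes "e \<in> E" "e \<noteq> {a, b}" "e' \<in> {{a, v}, {v, b}}"
  shows "path_image (new_arc e) \<inter> path_image (new_arc e') \<subseteq> new_pos ` (e \<inter> e')"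
proof -
  consider "e' = {a, v}" | "e' = {v, b}"
    using assms(3) by blast
  then show ?thesis
  proof cases
    case 1
    have "path_image (new_arc e) \<inter> path_image (new_arc e') \<subseteq> pos ` (e \<inter> {a})"
      using other_edge_first_half[OF assms(1,2)] new_arc_old[OF assms(1)] new_arc_halves 1
      by simp
    also have "\<dots> = new_pos ` (e \<inter> {a})"
      using new_pos_image[of "e \<inter> {a}"] ends(1) by auto
    also have "\<dots> \<subseteq> new_pos ` (e \<inter> e')"
      using 1 by auto
    finally show ?thesis .
  next
    case 2
    have "path_image (new_arc e) \<inter> path_image (new_arc e') \<subseteq> pos ` (e \<inter> {b})"
      using other_edge_second_half[OF assms(1,2)] new_arc_old[OF assms(1)] new_arc_halves 2
      by simp
    also have "\<dots> = new_pos ` (e \<inter> {b})"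
      using new_pos_image[of "e \<inter> {b}"] ends(2) by auto
    also have "\<dots> \<subseteq> new_pos ` (e \<inter> e')"
      using 2 by auto
    finally show ?thesis .
  qed
qed

lemma new_crossing_old_old:
  assumes "e \<in> E" "e' \<in> E" "e \<noteq> e'"
  shows "path_image (new_arc e) \<inter> path_image (new_arc e') \<subseteq> new_pos ` (e \<inter> e')"
proof -
  have "e \<inter> e' \<subseteq> S"
    using edges_in[OF assms(1)] by auto
  then have "new_pos ` (e \<inter> e') = pos ` (e \<inter> e')"
    by (rule new_pos_image)
  then show ?thesis
    using crossing[OF assms] new_arc_old[OF assms(1)] new_arc_old[OF assms(2)] by simp
qed

lemma new_crossing_new_new:
  assumes "e \<in> {{a, v}, {v, b}}" "e' \<in> {{a, v}, {v, b}}" "e \<noteq> e'"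
  shows "path_image (new_arc e) \<inter> path_image (new_arc e') \<subseteq> new_pos ` (e \<inter> e')"
proof -
  have "path_image first_half \<inter> path_image second_half \<subseteq> new_pos ` ({a, v} \<inter> {v, b})"
    using halves(7) by (simp add: new_pos_new)
  then show ?thesis
    using assms new_arc_halves by (auto simp: Int_commute)
qed

lemma new_crossings:
  assumes "e \<in> subdivide E a b v" "e' \<in> subdivide E a b v" "e \<noteq> e'"
  shows "path_image (new_arc e) \<inter> path_image (new_arc e') \<subseteq> new_pos ` (e \<inter> e')"
proof -
  have old: "x \<in> E" "x \<noteq> {a, b}" if "x \<in> subdivide E a b v" "x \<notin> {{a, v}, {v, b}}" for x
    using that by (simp_all add: subdivide_def)
  show ?thesis
  proof (cases "e \<in> {{a, v}, {v, b}}")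
    case e_new: True
    show ?thesis
    proof (cases "e' \<in> {{a, v}, {v, b}}")
      case True
      then show ?thesis by (rule new_crossing_new_new[OF e_new _ assms(3)])
    next
      case False
      then show ?thesis
        using new_crossing_old_new[OF old[OF assms(2) False] e_new] by (simp add: Int_commute)
    qed
  next
    case e_old: False
    show ?thesis
    proof (cases "e' \<in> {{a, v}, {v, b}}")
      case True
      then show ?thesis by (rule new_crossing_old_new[OF old[OF assms(1) e_old]])
    next
      case False
      then show ?thesis
        by (rule new_crossing_old_old[OF old(1)[OF assms(1) e_old] old(1)[OF assms(2)] assms(3)])
    qed
  qed
qed

lemma subdivided_embedding: "plane_embedding (insert v S) (subdivide E a b v) new_pos new_arc"
  unfolding plane_embedding_def
  using new_inj new_edges_drawn new_crossings by simp

end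

lemma planar_subdivide:
  assumes "planar S E" "\<forall>e\<in>E. e \<subseteq> S" "{a, b} \<in> E" "v \<notin> S"
  shows "planar (insert v S) (subdivide E a b v)"
proof -
  obtain pos \<gamma> where emb: "plane_embedding S E pos \<gamma>"
    using assms(1) planar_iff_embedding by blast
  then obtain x y where xy: "{a, b} = {x, y}" and drawn: "drawn_edge pos S (\<gamma> {a, b}) x y"
    using plane_embeddingD(2)[OF emb assms(3)] by blast
  interpret subdivided_drawing S E pos \<gamma> x y v
  proof
    show "plane_embedding S E pos \<gamma>" by (rule emb)
    show "\<And>e. e \<in> E \<Longrightarrow> e \<subseteq> S" using assms(2) by blast
    show "{x, y} \<in> E" using assms(3) xy by simp
    show "drawn_edge pos S (\<gamma> {x, y}) x y" using drawn xy by simp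
    show "v \<notin> S" by (rule assms(4))
  qed
  have "subdivide E x y v = subdivide E a b v"
    using xy subdivide_commute by (metis doubleton_eq_iff)
  then show ?thesis
    using subdivided_embedding planar_iff_embedding by metis
qed

locale edge_subdivision =
  fixes S :: "nat set" and E :: "nat set set" and a b v :: nat
  assumes simple: "simple_graph S E"
    and edge: "{a, b} \<in> E"
    and fresh: "v \<notin> S"
begin

lemma edges_in: "e \<in> E \<Longrightarrow> e \<subseteq> S"
  using simple by (simp add: simple_graph_def)

lemma ends: "a \<in> S" "b \<in> S" "a \<noteq> b" "a \<noteq> v" "b \<noteq> v"
proof -
  show "a \<in> S" "b \<in> S"
    using edges_in[OF edge] by auto
  then show "a \<noteq> v" "b \<noteq> v"
    using fresh by auto
  show "a \<noteq> b"
    using simple edge by (auto simp: simple_graph_def)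
qed

lemma fresh_not_in_edge: "e \<in> E \<Longrightarrow> v \<notin> e"
  using edges_in fresh by blast

lemma subdivide_cases:
  assumes "e \<in> subdivide E a b v"
  obtains "e \<in> E" "e \<noteq> {a, b}" | "e = {a, v}" | "e = {v, b}"
  using assms by (auto simp: subdivide_def)

lemma subdivision_simple: "simple_graph (insert v S) (subdivide E a b v)"
proof -
  have "e \<subseteq> insert v S \<and> card e = 2" if "e \<in> subdivide E a b v" for e
    using that simple ends by (cases rule: subdivide_cases) (auto simp: simple_graph_def)
  then show ?thesis
    using simple by (simp add: simple_graph_def)
qed

text \<open>Every edge of the original graph becomes a path of length at most two.\<close>

lemma subdivision_connected:
  assumes "graph_connected S E"
  shows "graph_connected (insert v S) (subdivide E a b v)"
proof (rule graph_connected_from_root)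
  let ?R = "adj_rel (insert v S) (subdivide E a b v)"
  have via_v: "(a, v) \<in> ?R" "(v, b) \<in> ?R" "(b, v) \<in> ?R" "(v, a) \<in> ?R"
    using ends by (auto simp: adj_rel_iff subdivide_def insert_commute)
  have step: "(p, q) \<in> ?R\<^sup>*" if "(p, q) \<in> adj_rel S E" for p q
  proof (cases "{p, q} = {a, b}")
    case True
    then consider "p = a" "q = b" | "p = b" "q = a"
      by (auto simp: doubleton_eq_iff)
    then show ?thesis
      using via_v by cases (meson r_into_rtrancl rtrancl_into_rtrancl)+
  next
    case False
    then have "(p, q) \<in> ?R"
      using that by (auto simp: adj_rel_iff subdivide_def)
    then show ?thesis ..
  qed
  fix p assume "p \<in> insert v S"
  then consider "p = v" | "p \<in> S"
    by blast
  then show "(a, p) \<in> ?R\<^sup>*"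
  proof cases
    case 1
    then show ?thesis using via_v(1) by simp
  next
    case 2
    then have "(a, p) \<in> (adj_rel S E)\<^sup>*"
      using assms ends(1) by (simp add: graph_connected_adj_rel)
    then show ?thesis
      using rtrancl_map_steps[where f = id, OF step] by simp
  qed
qed

text \<open>A colouring of G - ab with at least three colours extends to the subdivision:
  the new vertex v has only the two neighbours a and b.\<close>

lemma subdivision_colorable:
  assumes "3 \<le> k" "colorable S (E - {{a, b}}) k"
  shows "colorable (insert v S) (subdivide E a b v) k"
proof -
  obtain c where c: "is_coloring S (E - {{a, b}}) k c"
    using assms(2) by (auto simp: colorable_def)
  have "\<exists>col::nat. 1 \<le> col \<and> col \<le> 3 \<and> col \<noteq> c a \<and> col \<noteq> c b"
    by presburger
  then obtain col :: nat where col: "col \<in> {1..3}" "col \<noteq> c a" "col \<noteq> c b"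
    by auto
  have "is_coloring (insert v S) (subdivide E a b v) k (c(v := col))"
    unfolding is_coloring_def
  proof (intro conjI allI impI ballI)
    fix x assume "x \<in> insert v S"
    then show "(c(v := col)) x \<in> {1..k}"
      using c col assms(1) fresh by (auto simp: is_coloring_def)
  next
    fix x y assume xy: "{x, y} \<in> subdivide E a b v \<and> x \<noteq> y"
    then consider "{x, y} \<in> E - {{a, b}}" | "{x, y} = {a, v}" | "{x, y} = {v, b}"
      by (auto simp: subdivide_def)
    then show "(c(v := col)) x \<noteq> (c(v := col)) y"
    proof cases
      case 1
      then have "x \<noteq> v" "y \<noteq> v"
        using fresh_not_in_edge by auto
      then show ?thesis
        using c 1 xy by (auto simp: is_coloring_def)
    qed (use col ends xy in \<open>auto simp: doubleton_eq_iff\<close>)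
  qed
  then show ?thesis
    by (auto simp: colorable_def)
qed

text \<open>Conversely, from a k-colouring of the subdivision one gets a (k+1)-colouring of G by
  giving a a fresh colour.\<close>

lemma subdivision_not_colorable:
  assumes "\<not> colorable S E (Suc k)"
  shows "\<not> colorable (insert v S) (subdivide E a b v) k"
proof
  assume "colorable (insert v S) (subdivide E a b v) k"
  then obtain c where c: "is_coloring (insert v S) (subdivide E a b v) k c"
    by (auto simp: colorable_def)
  have "is_coloring S E (Suc k) (c(a := Suc k))"
    unfolding is_coloring_def
  proof (intro conjI allI impI ballI)
    fix x assume "x \<in> S"
    then show "(c(a := Suc k)) x \<in> {1..Suc k}"
      using c by (auto simp: is_coloring_def)
  next
    fix x y assume xy: "{x, y} \<in> E \<and> x \<noteq> y"
    then have "x \<in> S" "y \<in> S"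
      using edges_in by auto
    show "(c(a := Suc k)) x \<noteq> (c(a := Suc k)) y"
    proof (cases "x = a \<or> y = a")
      case True
      then show ?thesis
        using c xy \<open>x \<in> S\<close> \<open>y \<in> S\<close> by (auto simp: is_coloring_def)
    next
      case False
      then have "{x, y} \<in> subdivide E a b v"
        using xy by (auto simp: subdivide_def)
      then show ?thesis
        using c xy False by (auto simp: is_coloring_def)
    qed
  qed
  then show False
    using assms by (auto simp: colorable_def)
qed

text \<open>If G is not k-colourable, then a and v receive different colours in every k-colouring
  of the subdivision minus av: otherwise the colouring would be a k-colouring of G.\<close>

lemma subdivision_implicit:
  assumes "\<not> colorable S E k"
  shows "\<not> (\<exists>c. is_coloring (insert v S) (delete_edge (subdivide E a b v) a v) k c \<and> c a = c v)"
proof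
  assume "\<exists>c. is_coloring (insert v S) (delete_edge (subdivide E a b v) a v) k c \<and> c a = c v"
  then obtain c where c: "is_coloring (insert v S) (delete_edge (subdivide E a b v) a v) k c"
    and same: "c a = c v"
    by blast
  have proper: "c x \<noteq> c y" if "{x, y} \<in> subdivide E a b v" "{x, y} \<noteq> {a, v}" "x \<noteq> y" for x y
    using c that by (auto simp: is_coloring_def delete_edge_def)
  have "c v \<noteq> c b"
    using proper[of v b] ends by (auto simp: subdivide_def doubleton_eq_iff)
  have "is_coloring S E k c"
    unfolding is_coloring_def
  proof (intro conjI allI impI ballI)
    fix x assume "x \<in> S"
    then show "c x \<in> {1..k}"
      using c by (auto simp: is_coloring_def)
  next
    fix x y assume xy: "{x, y} \<in> E \<and> x \<noteq> y"
    show "c x \<noteq> c y"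
    proof (cases "{x, y} = {a, b}")
      case True
      then show ?thesis
        using \<open>c v \<noteq> c b\<close> same by (auto simp: doubleton_eq_iff)
    next
      case False
      moreover have "{x, y} \<noteq> {a, v}"
        using fresh_not_in_edge xy by blast
      ultimately show ?thesis
        using proper xy by (auto simp: subdivide_def)
    qed
  qed
  then show False
    using assms by (auto simp: colorable_def)
qed

lemma contract_subdivision_verts: "contract_verts (insert v S) (subdivide E a b v) a v = S"
  using fresh by (auto simp: contract_verts_def)

text \<open>After contracting av, the merged vertex a has exactly its old neighbours: it loses b
  as a neighbour of a but regains it as the other neighbour of v.\<close>

lemma neighbours_subdivision:
  "(neighbours (subdivide E a b v) a \<union> neighbours (subdivide E a b v) v) - {a, v}
     = neighbours E a"
proof -
  have at_a: "{a, x} \<in> subdivide E a b v \<longleftrightarrow> {a, x} \<in> E \<and> x \<noteq> b"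
    if "x \<noteq> a" "x \<noteq> v" for x
    using that ends by (auto simp: subdivide_def doubleton_eq_iff)
  have at_v: "{v, x} \<in> subdivide E a b v \<longleftrightarrow> x = a \<or> x = b" for x
  proof -
    have "{v, x} \<notin> E"
      using fresh_not_in_edge by blast
    then show ?thesis
      using ends by (auto simp: subdivide_def doubleton_eq_iff)
  qed
  have "x \<noteq> v" if "{a, x} \<in> E" for x
    using fresh_not_in_edge[OF that] by blast
  then have "neighbours (subdivide E a b v) a - {a, v} = neighbours E a - {b}"
    using at_a by (auto simp: neighbours_def adj_def)
  moreover have "neighbours (subdivide E a b v) v - {a, v} = {b}"
    using at_v ends by (auto simp: neighbours_def adj_def)
  moreover have "b \<in> neighbours E a"
    using edge ends by (simp add: neighbours_def adj_def)
  ultimately show ?thesis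
    by (simp add: Un_Diff Un_Diff_cancel2 insert_absorb)
qed

lemma edges_at: "{{a, x} | x. x \<in> neighbours E a} = {e \<in> E. a \<in> e}"
proof -
  have "e \<in> {{a, x} | x. x \<in> neighbours E a}" if e: "e \<in> E" "a \<in> e" for e
  proof -
    obtain x y where "e = {x, y}" "x \<noteq> y"
      using simple_graph_edge[OF simple e(1)] by blast
    then obtain z where "e = {a, z}" "z \<noteq> a"
      using e(2) by (auto simp: insert_commute)
    then show ?thesis
      using e(1) by (auto simp: neighbours_def adj_def)
  qed
  then show ?thesis
    by (auto simp: neighbours_def adj_def)
qed

lemma contract_subdivision_edges: "contract_edges (insert v S) (subdivide E a b v) a v = E"
proof -
  have "{e \<in> subdivide E a b v. a \<notin> e \<and> v \<notin> e} = {e \<in> E. a \<notin> e}"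
    using fresh_not_in_edge by (auto simp: subdivide_def)
  then have "contract_edges (insert v S) (subdivide E a b v) a v
               = {e \<in> E. a \<notin> e} \<union> {e \<in> E. a \<in> e}"
    by (simp add: contract_edges_def neighbours_subdivision edges_at)
  then show ?thesis
    by blast
qed

lemma subdivision_witness:
  assumes "graph_connected S E" "planar S E"
    and "\<not> colorable S E 4" "colorable S (E - {{a, b}}) 4"
  shows "simple_graph (insert v S) (subdivide E a b v) \<and>
         graph_connected (insert v S) (subdivide E a b v) \<and>
         planar (insert v S) (subdivide E a b v) \<and>
         k_chromatic (insert v S) (subdivide E a b v) 4 \<and>
         a \<in> insert v S \<and> v \<in> insert v S \<and> a \<noteq> v \<and>
         implicit_edge (insert v S) (subdivide E a b v) 4 a v \<and>
         planar (contract_verts (insert v S) (subdivide E a b v) a v)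
                (contract_edges (insert v S) (subdivide E a b v) a v)"
proof -
  have chromatic: "k_chromatic (insert v S) (subdivide E a b v) 4"
    using subdivision_colorable[of 4] subdivision_not_colorable[of 3] assms(3,4)
    by (simp add: k_chromatic_def numeral_eq_Suc)
  have "planar (insert v S) (subdivide E a b v)"
    using planar_subdivide[OF assms(2) _ edge fresh] edges_in by blast
  moreover have "implicit_edge (insert v S) (subdivide E a b v) 4 a v"
    using chromatic subdivision_implicit[OF assms(3)] ends by (simp add: implicit_edge_def)
  ultimately show ?thesis
    using subdivision_simple subdivision_connected[OF assms(1)] chromatic ends assms(2)
    by (simp add: contract_subdivision_verts contract_subdivision_edges)
qed

end

locale vertex_contraction =
  fixes V :: "nat set" and E :: "nat set set" and u v :: nat
  assumes simple: "simple_graph V E"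
    and u_in: "u \<in> V" and v_in: "v \<in> V" and distinct: "u \<noteq> v"
begin

definition merged :: "nat \<Rightarrow> nat" where
  "merged z = (if z = v then u else z)"

lemma merged_vertex: "z \<in> V \<Longrightarrow> merged z \<in> contract_verts V E u v"
  using u_in distinct by (auto simp: merged_def contract_verts_def)

lemma adj_vertex: "adj E x y \<Longrightarrow> y \<in> V"
  using simple by (auto simp: adj_def simple_graph_def)

lemma contract_edge_cases:
  assumes "e \<in> contract_edges V E u v"
  obtains "e \<in> E" "u \<notin> e" "v \<notin> e"
    | x where "e = {u, x}" "x \<noteq> u" "x \<noteq> v" "adj E u x \<or> adj E v x"
  using assms by (auto simp: contract_edges_def neighbours_def)

lemma merged_edge:
  assumes "{p, q} \<in> E" "p \<noteq> q" "{p, q} \<noteq> {u, v}"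
  shows "{merged p, merged q} \<in> contract_edges V E u v \<and> merged p \<noteq> merged q"
proof -
  have new_edge: "{u, x} \<in> contract_edges V E u v" if "adj E u x \<or> adj E v x" "x \<notin> {u, v}" for x
    using that by (auto simp: contract_edges_def neighbours_def)
  consider "p \<notin> {u, v}" "q \<notin> {u, v}" | "p \<in> {u, v}" "q \<notin> {u, v}" | "p \<notin> {u, v}" "q \<in> {u, v}"
    using assms(2,3) by auto
  then show ?thesis
  proof cases
    case 1
    then show ?thesis
      using assms(1,2) by (auto simp: merged_def contract_edges_def)
  next
    case 2
    then have "adj E u q \<or> adj E v q"
      using assms(1,2) by (auto simp: adj_def)
    then show ?thesis
      using new_edge 2 by (auto simp: merged_def)
  next
    case 3
    then have "adj E u p \<or> adj E v p"
      using assms(1,2) by (auto simp: adj_def insert_commute)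
    then show ?thesis
      using new_edge 3 by (auto simp: merged_def insert_commute)
  qed
qed

lemma contraction_simple: "simple_graph (contract_verts V E u v) (contract_edges V E u v)"
proof -
  have "e \<subseteq> V - {v} \<and> card e = 2" if "e \<in> contract_edges V E u v" for e
    using that
  proof (cases rule: contract_edge_cases)
    case 1
    then show ?thesis using simple by (auto simp: simple_graph_def)
  next
    case (2 x)
    then show ?thesis using adj_vertex u_in distinct by auto
  qed
  moreover have "finite (V - {v})" "V - {v} \<noteq> {}"
    using simple u_in distinct by (auto simp: simple_graph_def)
  ultimately show ?thesis
    by (simp add: simple_graph_def contract_verts_def)
qed

text \<open>Contraction preserves connectivity, since merged maps walks to walks.\<close>

lemma contraction_connected:
  assumes "graph_connected V E"
  shows "graph_connected (contract_verts V E u v) (contract_edges V E u v)"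
proof (rule graph_connected_from_root)
  let ?R = "adj_rel (contract_verts V E u v) (contract_edges V E u v)"
  have step: "(merged p, merged q) \<in> ?R\<^sup>*" if "(p, q) \<in> adj_rel V E" for p q
  proof (cases "{p, q} = {u, v}")
    case True
    then have "merged p = merged q"
      by (auto simp: merged_def doubleton_eq_iff)
    then show ?thesis by simp
  next
    case False
    then have "(merged p, merged q) \<in> ?R"
      using that merged_edge merged_vertex by (auto simp: adj_rel_iff)
    then show ?thesis ..
  qed
  fix p assume p: "p \<in> contract_verts V E u v"
  then have "(u, p) \<in> (adj_rel V E)\<^sup>*"
    using assms u_in by (auto simp: graph_connected_adj_rel contract_verts_def)
  then have "(merged u, merged p) \<in> ?R\<^sup>*"
    using rtrancl_map_steps[where f = merged, OF step] by blast
  then show "(u, p) \<in> ?R\<^sup>*"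
    using p distinct by (simp add: merged_def contract_verts_def)
qed

text \<open>A k-colouring of G gives a (k+1)-colouring of the contraction: the merged vertex gets
  the new colour.\<close>

lemma contraction_colorable_Suc:
  assumes "colorable V E k"
  shows "colorable (contract_verts V E u v) (contract_edges V E u v) (Suc k)"
proof -
  obtain c where c: "is_coloring V E k c"
    using assms by (auto simp: colorable_def)
  have "is_coloring (contract_verts V E u v) (contract_edges V E u v) (Suc k) (c(u := Suc k))"
    unfolding is_coloring_def
  proof (intro conjI allI impI ballI)
    fix x assume "x \<in> contract_verts V E u v"
    then show "(c(u := Suc k)) x \<in> {1..Suc k}"
      using c by (auto simp: is_coloring_def contract_verts_def)
  next
    fix x y assume xy: "{x, y} \<in> contract_edges V E u v \<and> x \<noteq> y"
    then have "{x, y} \<in> contract_edges V E u v" by simp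
    then show "(c(u := Suc k)) x \<noteq> (c(u := Suc k)) y"
    proof (cases rule: contract_edge_cases)
      case 1
      then show ?thesis using c xy by (auto simp: is_coloring_def)
    next
      case (2 z)
      then have "c z \<in> {1..k}"
        using c adj_vertex by (auto simp: is_coloring_def)
      then show ?thesis
        using 2 xy by (auto simp: doubleton_eq_iff)
    qed
  qed
  then show ?thesis
    by (auto simp: colorable_def)
qed

lemma lift_coloring:
  assumes "is_coloring (contract_verts V E u v) (contract_edges V E u v) k d"
  shows "is_coloring V (delete_edge E u v) k (d \<circ> merged)"
  unfolding is_coloring_def
proof (intro conjI allI impI ballI)
  fix x assume "x \<in> V"
  then show "(d \<circ> merged) x \<in> {1..k}"
    using assms merged_vertex by (auto simp: is_coloring_def)
next
  fix x y assume "{x, y} \<in> delete_edge E u v \<and> x \<noteq> y"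
  then have "{merged x, merged y} \<in> contract_edges V E u v \<and> merged x \<noteq> merged y"
    using merged_edge by (auto simp: delete_edge_def)
  then show "(d \<circ> merged) x \<noteq> (d \<circ> merged) y"
    using assms by (auto simp: is_coloring_def)
qed

text \<open>If uv is an implicit edge of a k-chromatic graph then the contraction is exactly
  (k+1)-chromatic: a k-colouring of it would pull back to a k-colouring of G - uv giving u and v
  the same colour.\<close>

lemma contraction_chromatic:
  assumes "implicit_edge V E k u v"
  shows "k_chromatic (contract_verts V E u v) (contract_edges V E u v) (Suc k)"
proof -
  have "colorable V E k"
    using assms by (simp add: implicit_edge_def k_chromatic_def)
  moreover have "\<not> colorable (contract_verts V E u v) (contract_edges V E u v) k"
  proof
    assume "colorable (contract_verts V E u v) (contract_edges V E u v) k"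
    then obtain d where "is_coloring (contract_verts V E u v) (contract_edges V E u v) k d"
      by (auto simp: colorable_def)
    then have "is_coloring V (delete_edge E u v) k (d \<circ> merged)"
      by (rule lift_coloring)
    moreover have "(d \<circ> merged) u = (d \<circ> merged) v"
      by (simp add: merged_def)
    ultimately show False
      using assms by (auto simp: implicit_edge_def)
  qed
  ultimately show ?thesis
    using contraction_colorable_Suc by (simp add: k_chromatic_def)
qed

end

lemma implicit_edge_from_five_chromatic:
  assumes "simple_graph V E" "planar V E" "k_chromatic V E 5"
  shows "\<exists>V E u v. simple_graph V E \<and> graph_connected V E \<and> planar V E \<and> k_chromatic V E 4 \<and>
           u \<in> V \<and> v \<in> V \<and> u \<noteq> v \<and> implicit_edge V E 4 u v \<and>
           planar (contract_verts V E u v) (contract_edges V E u v)"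
proof -
  have "\<not> colorable V E 4" "1 \<le> (4::nat)"
    using assms(3) by (simp_all add: k_chromatic_def)
  then obtain S F a b where H: "simple_graph S F" "graph_connected S F" "S \<subseteq> V" "F \<subseteq> E"
    "{a, b} \<in> F" "\<not> colorable S F 4" "colorable S (F - {{a, b}}) 4"
    using connected_critical_subgraph[OF assms(1)] by blast
  have "planar S F"
    using planar_subgraph[OF assms(2) H(3,4)] H(1) by (simp add: simple_graph_def)
  have "finite S"
    using H(1) by (simp add: simple_graph_def)
  then obtain v :: nat where "v \<notin> S"
    using ex_new_if_finite[OF infinite_UNIV_nat] by blast
  interpret edge_subdivision S F a b v
    using H(1,5) \<open>v \<notin> S\<close> by unfold_locales
  show ?thesis
    using subdivision_witness[OF H(2) \<open>planar S F\<close> H(6,7)] by blast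
qed

lemma five_chromatic_from_implicit_edge:
  assumes "simple_graph V E" "graph_connected V E" "u \<in> V" "v \<in> V" "u \<noteq> v"
    and "implicit_edge V E 4 u v" "planar (contract_verts V E u v) (contract_edges V E u v)"
  shows "\<exists>V E. simple_graph V E \<and> graph_connected V E \<and> planar V E \<and> k_chromatic V E 5"
proof -
  interpret vertex_contraction V E u v
    using assms(1,3-5) by unfold_locales
  have "k_chromatic (contract_verts V E u v) (contract_edges V E u v) 5"
    using contraction_chromatic[OF assms(6)] by simp
  then show ?thesis
    using contraction_simple contraction_connected[OF assms(2)] assms(7) by blast
qed

theorem theorem7:
  shows "(\<exists>V E. simple_graph V E \<and> graph_connected V E \<and> planar V E \<and> k_chromatic V E 5)
     \<longleftrightarrow>
     (\<exists>V E u v. simple_graph V E \<and> graph_connected V E \<and> planar V E \<and> k_chromatic V E 4 \<and>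
        u \<in> V \<and> v \<in> V \<and> u \<noteq> v \<and> implicit_edge V E 4 u v \<and>
        planar (contract_verts V E u v) (contract_edges V E u v))"
  using implicit_edge_from_five_chromatic five_chromatic_from_implicit_edge by blast

end
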